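(* Let $\mathcal{C}$ be a category and $A$ an object of $\mathcal{C}$ with $D(A)=k$ finite. Then every sequence $\cdots\leqslant^d X_i\leqslant^d\cdots\leqslant^d X_1\leqslant^d A$ of objects of $\mathcal{C}$ contains at most $k$ pairwise non-isomorphic objects.
   Context: In a category $\mathcal{C}$, $X\leqslant^d Y$ means there are morphisms $f:X\to Y$, $g:Y\to X$ with $g\circ f=\mathrm{id}_X$; $X<^p Y$ means $X\leqslant^d Y$ and $X\not\cong Y$. A chain of length $k$ for $A$ is $X_k<^p\cdots<^p X_1\leqslant^d A$; the depth $D(A)$ is the supremum of the lengths of all chains for $A$. *)

theory Defs
  imports Main "HOL-Library.Extended_Nat"
begin

text \<open>A category given by a set of objects Obj, hom-sets Hom X Y, identities idm X and
  composition cmp g f (meaning g after f).\<close>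

definition category ::
  "'o set \<Rightarrow> ('o \<Rightarrow> 'o \<Rightarrow> 'm set) \<Rightarrow> ('o \<Rightarrow> 'm) \<Rightarrow> ('m \<Rightarrow> 'm \<Rightarrow> 'm) \<Rightarrow> bool" where
  "category Obj Hom idm cmp \<longleftrightarrow>
     (\<forall>X\<in>Obj. idm X \<in> Hom X X) \<and>
     (\<forall>X\<in>Obj. \<forall>Y\<in>Obj. \<forall>Z\<in>Obj. \<forall>f\<in>Hom X Y. \<forall>g\<in>Hom Y Z. cmp g f \<in> Hom X Z) \<and>
     (\<forall>X\<in>Obj. \<forall>Y\<in>Obj. \<forall>f\<in>Hom X Y. cmp (idm Y) f = f \<and> cmp f (idm X) = f) \<and>
     (\<forall>W\<in>Obj. \<forall>X\<in>Obj. \<forall>Y\<in>Obj. \<forall>Z\<in>Obj. \<forall>f\<in>Hom W X. \<forall>g\<in>Hom X Y. \<forall>h\<in>Hom Y Z.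
        cmp h (cmp g f) = cmp (cmp h g) f)"

definition retract_le ::
  "('o \<Rightarrow> 'o \<Rightarrow> 'm set) \<Rightarrow> ('o \<Rightarrow> 'm) \<Rightarrow> ('m \<Rightarrow> 'm \<Rightarrow> 'm) \<Rightarrow> 'o \<Rightarrow> 'o \<Rightarrow> bool" where
  "retract_le Hom idm cmp X Y \<longleftrightarrow>
     (\<exists>f\<in>Hom X Y. \<exists>g\<in>Hom Y X. cmp g f = idm X)"

definition isomorphic ::
  "('o \<Rightarrow> 'o \<Rightarrow> 'm set) \<Rightarrow> ('o \<Rightarrow> 'm) \<Rightarrow> ('m \<Rightarrow> 'm \<Rightarrow> 'm) \<Rightarrow> 'o \<Rightarrow> 'o \<Rightarrow> bool" where
  "isomorphic Hom idm cmp X Y \<longleftrightarrow>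
     (\<exists>f\<in>Hom X Y. \<exists>g\<in>Hom Y X. cmp g f = idm X \<and> cmp f g = idm Y)"

definition proper_retract ::
  "('o \<Rightarrow> 'o \<Rightarrow> 'm set) \<Rightarrow> ('o \<Rightarrow> 'm) \<Rightarrow> ('m \<Rightarrow> 'm \<Rightarrow> 'm) \<Rightarrow> 'o \<Rightarrow> 'o \<Rightarrow> bool" where
  "proper_retract Hom idm cmp X Y \<longleftrightarrow>
     retract_le Hom idm cmp X Y \<and> \<not> isomorphic Hom idm cmp X Y"

text \<open>A chain of length k for A: objects X_1,...,X_k with X_k <p ... <p X_1 \<le>d A
  (for k = 0 the empty chain).\<close>
definition is_chain ::
  "'o set \<Rightarrow> ('o \<Rightarrow> 'o \<Rightarrow> 'm set) \<Rightarrow> ('o \<Rightarrow> 'm) \<Rightarrow> ('m \<Rightarrow> 'm \<Rightarrow> 'm) \<Rightarrow> 'o \<Rightarrow> nat \<Rightarrow> (nat \<Rightarrow> 'o) \<Rightarrow> bool" where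
  "is_chain Obj Hom idm cmp A k X \<longleftrightarrow>
     (\<forall>i\<in>{1..k}. X i \<in> Obj) \<and>
     (k \<ge> 1 \<longrightarrow> retract_le Hom idm cmp (X 1) A) \<and>
     (\<forall>i. 1 \<le> i \<and> i < k \<longrightarrow> proper_retract Hom idm cmp (X (Suc i)) (X i))"

definition depth ::
  "'o set \<Rightarrow> ('o \<Rightarrow> 'o \<Rightarrow> 'm set) \<Rightarrow> ('o \<Rightarrow> 'm) \<Rightarrow> ('m \<Rightarrow> 'm \<Rightarrow> 'm) \<Rightarrow> 'o \<Rightarrow> enat" where
  "depth Obj Hom idm cmp A = Sup {enat k | k. \<exists>X. is_chain Obj Hom idm cmp A k X}"

end

theory Submission
  imports Defs
begin

text \<open>Since retracts compose, any finite set of pairwise non-isomorphic terms of the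
  sequence, read in increasing index order, is a chain for A and so has at most D(A) elements;
  an infinite such set would contain finite ones of every size.\<close>

lemma retract_le_refl:
  assumes "category Obj Hom idm cmp" and "X \<in> Obj"
  shows "retract_le Hom idm cmp X X"
  using assms unfolding category_def retract_le_def by metis

lemma retract_le_trans:
  assumes cat: "category Obj Hom idm cmp" and ob: "X \<in> Obj" "Y \<in> Obj" "Z \<in> Obj"
    and XY: "retract_le Hom idm cmp X Y" and YZ: "retract_le Hom idm cmp Y Z"
  shows "retract_le Hom idm cmp X Z"
proof -
  obtain f1 g1 where f1: "f1 \<in> Hom X Y" and g1: "g1 \<in> Hom Y X" and e1: "cmp g1 f1 = idm X"
    using XY unfolding retract_le_def by blast
  obtain f2 g2 where f2: "f2 \<in> Hom Y Z" and g2: "g2 \<in> Hom Z Y" and e2: "cmp g2 f2 = idm Y"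
    using YZ unfolding retract_le_def by blast
  note C = cat[unfolded category_def]
  have f: "cmp f2 f1 \<in> Hom X Z" and g: "cmp g1 g2 \<in> Hom Z X"
    using C ob f1 f2 g1 g2 by blast+
  have "cmp (cmp g1 g2) (cmp f2 f1) = cmp g1 (cmp g2 (cmp f2 f1))"
    using C ob f g1 g2 by metis
  also have "\<dots> = cmp g1 (cmp (cmp g2 f2) f1)"
    using C ob f1 f2 g2 by metis
  also have "\<dots> = idm X"
    using C ob f1 e1 e2 by metis
  finally show ?thesis
    unfolding retract_le_def using f g by blast
qed

lemma retract_le_descending_seq:
  assumes cat: "category Obj Hom idm cmp"
    and X_ob: "\<forall>i. 1 \<le> i \<and> enat i \<le> N \<longrightarrow> X i \<in> Obj"
    and Xseq: "\<forall>i. 1 \<le> i \<and> enat (Suc i) \<le> N \<longrightarrow> retract_le Hom idm cmp (X (Suc i)) (X i)"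
    and ij: "1 \<le> i" "i \<le> j" "enat j \<le> N"
  shows "retract_le Hom idm cmp (X j) (X i)"
  using ij(2,3)
proof (induction j rule: dec_induct)
  case base
  then show ?case using retract_le_refl[OF cat] X_ob ij(1) by blast
next
  case (step n)
  have le: "enat n \<le> N"
    using step.prems order_trans[of "enat n" "enat (Suc n)" N] by simp
  have "X (Suc n) \<in> Obj" "X n \<in> Obj" "X i \<in> Obj"
    using X_ob step.prems step.hyps(1) le ij(1) order_trans[of "enat i" "enat n" N] by auto
  moreover have "retract_le Hom idm cmp (X (Suc n)) (X n)"
    using Xseq step.prems step.hyps(1) ij(1) by simp
  ultimately show ?case
    using retract_le_trans[OF cat] step.IH le by blast
qed

lemma chain_length_le_depth:
  assumes "is_chain Obj Hom idm cmp A m Y"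
  shows "enat m \<le> depth Obj Hom idm cmp A"
  unfolding depth_def using assms by (intro Sup_upper) blast

lemma card_le_depth_if_descending_noniso:
  fixes T :: "'i::linorder set" and X :: "'i \<Rightarrow> 'o"
  assumes fin: "finite T"
    and ob: "\<forall>i\<in>T. X i \<in> Obj"
    and toA: "\<forall>i\<in>T. retract_le Hom idm cmp (X i) A"
    and desc: "\<forall>i\<in>T. \<forall>j\<in>T. i < j \<longrightarrow> retract_le Hom idm cmp (X j) (X i)"
    and noniso: "\<forall>i\<in>T. \<forall>j\<in>T. i \<noteq> j \<longrightarrow> \<not> isomorphic Hom idm cmp (X i) (X j)"
  shows "enat (card T) \<le> depth Obj Hom idm cmp A"
proof -
  define L where "L = sorted_list_of_set T"
  define Y where "Y j = X (L ! (j - 1))" for j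
  have len: "length L = card T" and sorted: "sorted_wrt (<) L"
    using fin by (simp_all add: L_def)
  have inT: "L ! (j - 1) \<in> T" if "1 \<le> j" "j \<le> card T" for j
    using that fin len nth_mem[of "j - 1" L] by (simp add: L_def)
  have "is_chain Obj Hom idm cmp A (card T) Y"
    unfolding is_chain_def
  proof (intro conjI ballI impI allI)
    fix i assume "i \<in> {1..card T}"
    then show "Y i \<in> Obj" using inT ob unfolding Y_def by auto
  next
    assume "1 \<le> card T"
    then show "retract_le Hom idm cmp (Y 1) A" using inT[of 1] toA unfolding Y_def by auto
  next
    fix i assume i: "1 \<le> i \<and> i < card T"
    have mem: "L ! i \<in> T" "L ! (i - 1) \<in> T"
      using inT[of "Suc i"] inT[of i] i by auto
    have lt: "L ! (i - 1) < L ! i"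
      using sorted i len by (simp add: sorted_wrt_iff_nth_less)
    then show "proper_retract Hom idm cmp (Y (Suc i)) (Y i)"
      unfolding proper_retract_def Y_def using desc noniso mem by auto
  qed
  then show ?thesis by (rule chain_length_le_depth)
qed

theorem proposition2p11:
  fixes Obj :: "'o set" and Hom :: "'o \<Rightarrow> 'o \<Rightarrow> 'm set"
    and idm :: "'o \<Rightarrow> 'm" and cmp :: "'m \<Rightarrow> 'm \<Rightarrow> 'm"
    and A :: 'o and k :: nat and N :: enat and X :: "nat \<Rightarrow> 'o"
  assumes cat: "category Obj Hom idm cmp"
    and A_ob: "A \<in> Obj"
    and depth: "depth Obj Hom idm cmp A = enat k"
    and X_ob: "\<forall>i. 1 \<le> i \<and> enat i \<le> N \<longrightarrow> X i \<in> Obj"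
    and X1: "1 \<le> N \<longrightarrow> retract_le Hom idm cmp (X 1) A"
    and Xseq: "\<forall>i. 1 \<le> i \<and> enat (Suc i) \<le> N \<longrightarrow> retract_le Hom idm cmp (X (Suc i)) (X i)"
  shows "\<forall>S. S \<subseteq> {i. 1 \<le> i \<and> enat i \<le> N} \<and>
             (\<forall>i\<in>S. \<forall>j\<in>S. i \<noteq> j \<longrightarrow> \<not> isomorphic Hom idm cmp (X i) (X j))
           \<longrightarrow> finite S \<and> card S \<le> k"
proof (intro allI impI)
  let ?I = "{i. 1 \<le> i \<and> enat i \<le> N}"
  note desc = retract_le_descending_seq[OF cat X_ob Xseq]
  have toA: "retract_le Hom idm cmp (X i) A" if "i \<in> ?I" for i
  proof -
    have "enat 1 \<le> N" using that order_trans[of "enat 1" "enat i" N] by simp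
    then show ?thesis
      using that X1 X_ob desc[of 1 i] retract_le_trans[OF cat _ _ A_ob, of "X i" "X 1"]
      by (simp add: one_enat_def)
  qed
  have bound: "card T \<le> k" if "finite T" "T \<subseteq> ?I"
    and "\<forall>i\<in>T. \<forall>j\<in>T. i \<noteq> j \<longrightarrow> \<not> isomorphic Hom idm cmp (X i) (X j)" for T
    using card_le_depth_if_descending_noniso[of T X Obj Hom idm cmp A] that X_ob toA desc depth
    by (fastforce simp: subset_iff)
  fix S assume S: "S \<subseteq> ?I \<and> (\<forall>i\<in>S. \<forall>j\<in>S. i \<noteq> j \<longrightarrow> \<not> isomorphic Hom idm cmp (X i) (X j))"
  have "finite S"
  proof (rule ccontr)
    assume "infinite S"
    then obtain T where "T \<subseteq> S" "finite T" "card T = Suc k"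
      using infinite_arbitrarily_large by blast
    then show False using bound[of T] S by auto
  qed
  then show "finite S \<and> card S \<le> k" using bound S by blast
qed

end
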